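(* Let $h:\mathbb{R}^d\to\mathbb{R}^{d_\eta}$ be an encoder and let $g$ be a final linear-softmax classification layer for two classes $A,B$, with logits $\boldsymbol{\mathrm{w}}_A^{\top}\boldsymbol{z}+b_A$ and $\boldsymbol{\mathrm{w}}_B^{\top}\boldsymbol{z}+b_B$ on a latent vector $\boldsymbol{z}\in\mathbb{R}^{d_\eta}$. Set $\boldsymbol{\mathrm{w}}=\boldsymbol{\mathrm{w}}_A-\boldsymbol{\mathrm{w}}_B$ and $b=b_A-b_B$, so that the separating hyperplane between classes $A$ and $B$ is $\{\boldsymbol{z}:\boldsymbol{\mathrm{w}}^{\top}\boldsymbol{z}+b=0\}$, and $g(\boldsymbol{z})=A$ if $\boldsymbol{\mathrm{w}}^{\top}\boldsymbol{z}+b>0$ and $g(\boldsymbol{z})=B$ otherwise. Let $f=g\circ h$ be the resulting binary classifier, and let $p(A\mid\boldsymbol{x},f)=\dfrac{e^{\boldsymbol{\mathrm{w}}_A^{\top}\boldsymbol{z}+b_A}}{e^{\boldsymbol{\mathrm{w}}_A^{\top}\boldsymbol{z}+b_A}+e^{\boldsymbol{\mathrm{w}}_B^{\top}\boldsymbol{z}+b_B}}$ with $\boldsymbol{z}=h(\boldsymbol{x})$ denote the softmax probability of class $A$ output by $f$ at an input $\boldsymbol{x}\in\mathbb{R}^d$. Let $\mathcal{T}(\boldsymbol{x})\sim\tau$ be a randomized transformation of the input $\boldsymbol{x}$, suppose $f(\boldsymbol{x})=A$, and let $$p_A=\mathbb{P}_{\mathcal{T}(\boldsymbol{x})}\big(f(\mathcal{T}(\boldsymbol{x}))=A\big)$$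 be the probability of obtaining the original class under the transformation. Let $\epsilon_\eta=h(\mathcal{T}(\boldsymbol{x}))-h(\boldsymbol{x})$ be the induced perturbation of the latent representation, and let $\rho$ be the distribution of the real random variable $\boldsymbol{\mathrm{w}}^{\top}\epsilon_\eta$, with cumulative distribution function $F$. Assume that the inverse $F^{-1}$ of $F$ exists and that $\rho$ has mean zero. Then $$p(A\mid\boldsymbol{x},f)=\frac{1}{1+e^{F^{-1}(1-p_A)}}.$$
   Context: Here $\boldsymbol{x}$ is an input image, $f$ a neural network used for binary classification decomposed as $f=g\circ h$ with $h$ the encoder (all layers up to the final classification layer) and $g$ the final classification layer. The random transformation $\mathcal{T}$ is arbitrary (e.g. additive noise, rotations, elastic deformations); the only randomness is in $\mathcal{T}(\boldsymbol{x})$. *)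

theory Defs
  imports "HOL-Probability.Probability"
begin

datatype cls = ClassA | ClassB

definition g_lin :: "real^'e \<Rightarrow> real \<Rightarrow> real^'e \<Rightarrow> cls" where
  "g_lin w b z = (if w \<bullet> z + b > 0 then ClassA else ClassB)"

definition softmax_A :: "real^'e \<Rightarrow> real \<Rightarrow> real^'e \<Rightarrow> real \<Rightarrow> real^'e \<Rightarrow> real" where
  "softmax_A wA bA wB bB z =
     exp (wA \<bullet> z + bA) / (exp (wA \<bullet> z + bA) + exp (wB \<bullet> z + bB))"

end

theory Submission
  imports Defs
begin

text \<open>With \<open>c = w \<bullet> h x + b\<close>, the transformed input keeps class A exactly when
  \<open>w \<bullet> \<epsilon>\<^sub>\<eta> > -c\<close>, so \<open>1 - p\<^sub>A = F (-c)\<close> and hence \<open>F\<^sup>-\<^sup>1 (1 - p\<^sub>A) = -c\<close>; on the other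
  hand the two-class softmax is the logistic function of the logit difference \<open>c\<close>.\<close>

lemma softmax_A_eq_logistic:
  "softmax_A wA bA wB bB z = 1 / (1 + exp (- ((wA - wB) \<bullet> z + (bA - bB))))"
proof -
  let ?a = "exp (wA \<bullet> z + bA)" and ?e = "exp (- ((wA - wB) \<bullet> z + (bA - bB)))"
  have "exp (wB \<bullet> z + bB) = ?a * ?e"
    by (simp add: inner_diff_left flip: exp_add)
  then have "softmax_A wA bA wB bB z = ?a / (?a * (1 + ?e))"
    unfolding softmax_A_def by (simp add: distrib_left)
  then show ?thesis
    by simp
qed

lemma (in prob_space) prob_greater_eq_one_minus_cdf:
  assumes "X \<in> borel_measurable M"
  shows "prob {\<omega> \<in> space M. t < X \<omega>} = 1 - cdf (distr M borel X) t"
proof -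
  have "{\<omega> \<in> space M. t < X \<omega>} = space M - (X -` {..t} \<inter> space M)"
    by auto
  moreover have "X -` {..t} \<inter> space M \<in> events"
    using assms by measurable
  ultimately show ?thesis
    using assms by (simp add: prob_compl cdf_def measure_distr)
qed

theorem proposition2:
  fixes M :: "'w measure" and T :: "'w \<Rightarrow> real^'d" and h :: "real^'d \<Rightarrow> real^'e"
    and wA wB w :: "real^'e" and bA bB b :: real and x :: "real^'d"
    and f :: "real^'d \<Rightarrow> cls" and pA :: real and F :: "real \<Rightarrow> real"
    and X :: "'w \<Rightarrow> real"
  assumes "prob_space M"
    and "T \<in> borel_measurable M"
    and "h \<in> borel_measurable borel"
    and "w = wA - wB" and "b = bA - bB"
    and "f = (\<lambda>u. g_lin w b (h u))"
    and "f x = ClassA"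
    and "pA = measure M {\<omega> \<in> space M. f (T \<omega>) = ClassA}"
    and "X = (\<lambda>\<omega>. w \<bullet> (h (T \<omega>) - h x))"
    and "F = cdf (distr M borel X)"
    and "inj F"
    and "integrable M X" and "integral\<^sup>L M X = 0"
  shows "softmax_A wA bA wB bB (h x) = 1 / (1 + exp (inv F (1 - pA)))"
proof -
  interpret prob_space M by fact
  define c where "c = w \<bullet> h x + b"
  have X_measurable: "X \<in> borel_measurable M"
    unfolding assms(9) using measurable_compose[OF assms(2,3)] by measurable
  have "{\<omega> \<in> space M. f (T \<omega>) = ClassA} = {\<omega> \<in> space M. -c < X \<omega>}"
    by (auto simp: assms(6,9) g_lin_def c_def inner_diff_right)
  then have "1 - pA = F (-c)"
    using prob_greater_eq_one_minus_cdf[OF X_measurable] by (simp add: assms(8,10))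
  then have "inv F (1 - pA) = -c"
    using assms(11) by simp
  then show ?thesis
    by (simp add: softmax_A_eq_logistic c_def assms(4,5))
qed

end
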